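(* The composition of weakly admissible correspondences in $\mathrm{DGRings}^{0,-1}$ is weakly admissible. The composition of anamorphisms is an anamorphism.
   Context: Rings are commutative and unital. $\mathrm{DGRings}^{0,-1}$ is the category of commutative DG rings $R$ with $R^i=0$ for $i\ne 0,-1$. Equivalently, such $R$ is a ring $R^0$, an $R^0$-module $R^{-1}$ and an $R^0$-linear $d:R^{-1}\to R^0$ with $d(x)y=d(y)x$. Quasi-isomorphisms are morphisms inducing isomorphisms on $\ker d$ and $\operatorname{coker} d$. A correspondence from $R_1$ to $R_2$ is a diagram $R_1\xleftarrow{f}R_{12}\xrightarrow{g}R_2$ in $\mathrm{DGRings}^{0,-1}$. The composition of correspondences $R_1\leftarrow R_{12}\to R_2$ and $R_2\leftarrow R_{23}\to R_3$ is $R_1\leftarrow R_{12}\times_{R_2}R_{23}\to R_3$, using the fiber product in $\mathrm{DGRings}^{0,-1}$. A correspondence is weakly admissible if $f$ is a quasi-isomorphism and $R_{12}^{-1}\to R_1^{-1}\times R_2^{-1}$ is surjective. It is an anamorphism if $f$ is a surjective quasi-isomorphism. *)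

theory Defs
  imports "HOL-Algebra.Module" "HOL-Algebra.RingHom"
begin

text \<open>A commutative DG ring concentrated in degrees 0 and -1:
  deg0 = the ring R^0, deg1 = the R^0-module R^{-1}, dif = the differential d.
  (The mult/one fields of the module record deg1 are unused: R^{-1} R^{-1} lands in degree -2, which is 0.)\<close>
record ('a, 'b) dgr =
  deg0 :: "'a ring"
  deg1 :: "('a, 'b) module"
  dif  :: "'b \<Rightarrow> 'a"

definition is_dgr :: "('a, 'b) dgr \<Rightarrow> bool" where
  "is_dgr A \<longleftrightarrow>
     cring (deg0 A) \<and> module (deg0 A) (deg1 A) \<and>
     dif A \<in> carrier (deg1 A) \<rightarrow> carrier (deg0 A) \<and>
     (\<forall>x\<in>carrier (deg1 A). \<forall>y\<in>carrier (deg1 A).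
        dif A (x \<oplus>\<^bsub>deg1 A\<^esub> y) = dif A x \<oplus>\<^bsub>deg0 A\<^esub> dif A y) \<and>
     (\<forall>r\<in>carrier (deg0 A). \<forall>x\<in>carrier (deg1 A).
        dif A (r \<odot>\<^bsub>deg1 A\<^esub> x) = r \<otimes>\<^bsub>deg0 A\<^esub> dif A x) \<and>
     (\<forall>x\<in>carrier (deg1 A). \<forall>y\<in>carrier (deg1 A).
        dif A x \<odot>\<^bsub>deg1 A\<^esub> y = dif A y \<odot>\<^bsub>deg1 A\<^esub> x)"

type_synonym ('a, 'b, 'c, 'd) dgmor = "('a \<Rightarrow> 'c) \<times> ('b \<Rightarrow> 'd)"

definition dg_hom :: "('a, 'b) dgr \<Rightarrow> ('c, 'd) dgr \<Rightarrow> ('a, 'b, 'c, 'd) dgmor \<Rightarrow> bool" where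
  "dg_hom A B \<phi> \<longleftrightarrow>
     fst \<phi> \<in> ring_hom (deg0 A) (deg0 B) \<and>
     snd \<phi> \<in> carrier (deg1 A) \<rightarrow> carrier (deg1 B) \<and>
     (\<forall>x\<in>carrier (deg1 A). \<forall>y\<in>carrier (deg1 A).
        snd \<phi> (x \<oplus>\<^bsub>deg1 A\<^esub> y) = snd \<phi> x \<oplus>\<^bsub>deg1 B\<^esub> snd \<phi> y) \<and>
     (\<forall>r\<in>carrier (deg0 A). \<forall>x\<in>carrier (deg1 A).
        snd \<phi> (r \<odot>\<^bsub>deg1 A\<^esub> x) = fst \<phi> r \<odot>\<^bsub>deg1 B\<^esub> snd \<phi> x) \<and>
     (\<forall>x\<in>carrier (deg1 A). fst \<phi> (dif A x) = dif B (snd \<phi> x))"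

text \<open>ker d (= H^{-1}) and the congruence modulo im d defining coker d (= H^0).\<close>
definition dg_ker :: "('a, 'b) dgr \<Rightarrow> 'b set" where
  "dg_ker A = {x \<in> carrier (deg1 A). dif A x = \<zero>\<^bsub>deg0 A\<^esub>}"

definition cong_im :: "('a, 'b) dgr \<Rightarrow> 'a \<Rightarrow> 'a \<Rightarrow> bool" where
  "cong_im A a a' \<longleftrightarrow> (\<exists>y\<in>carrier (deg1 A). a = a' \<oplus>\<^bsub>deg0 A\<^esub> dif A y)"

text \<open>Quasi-isomorphism: induced map on ker d is bijective, and the induced map
  R^0/im d \<rightarrow> R^0/im d on cokernels is well defined (automatic), injective and surjective.\<close>
definition quasi_iso :: "('a, 'b) dgr \<Rightarrow> ('c, 'd) dgr \<Rightarrow> ('a, 'b, 'c, 'd) dgmor \<Rightarrow> bool" where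
  "quasi_iso A B \<phi> \<longleftrightarrow>
     dg_hom A B \<phi> \<and>
     bij_betw (snd \<phi>) (dg_ker A) (dg_ker B) \<and>
     (\<forall>a\<in>carrier (deg0 A). \<forall>a'\<in>carrier (deg0 A).
        cong_im B (fst \<phi> a) (fst \<phi> a') \<longrightarrow> cong_im A a a') \<and>
     (\<forall>b\<in>carrier (deg0 B). \<exists>a\<in>carrier (deg0 A). cong_im B b (fst \<phi> a))"

definition dg_surj :: "('a, 'b) dgr \<Rightarrow> ('c, 'd) dgr \<Rightarrow> ('a, 'b, 'c, 'd) dgmor \<Rightarrow> bool" where
  "dg_surj A B \<phi> \<longleftrightarrow>
     fst \<phi> ` carrier (deg0 A) = carrier (deg0 B) \<and> snd \<phi> ` carrier (deg1 A) = carrier (deg1 B)"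

definition fib_prod :: "('a, 'b) dgr \<Rightarrow> ('c, 'd) dgr \<Rightarrow> ('a, 'b, 'e, 'f) dgmor \<Rightarrow> ('c, 'd, 'e, 'f) dgmor
    \<Rightarrow> ('a \<times> 'c, 'b \<times> 'd) dgr" where
  "fib_prod A C f g =
    \<lparr> deg0 = \<lparr> carrier = {(a, c). a \<in> carrier (deg0 A) \<and> c \<in> carrier (deg0 C) \<and> fst f a = fst g c},
               mult = (\<lambda>(a, c) (a', c'). (a \<otimes>\<^bsub>deg0 A\<^esub> a', c \<otimes>\<^bsub>deg0 C\<^esub> c')),
               one = (\<one>\<^bsub>deg0 A\<^esub>, \<one>\<^bsub>deg0 C\<^esub>),
               zero = (\<zero>\<^bsub>deg0 A\<^esub>, \<zero>\<^bsub>deg0 C\<^esub>),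
               add = (\<lambda>(a, c) (a', c'). (a \<oplus>\<^bsub>deg0 A\<^esub> a', c \<oplus>\<^bsub>deg0 C\<^esub> c')) \<rparr>,
      deg1 = \<lparr> carrier = {(x, z). x \<in> carrier (deg1 A) \<and> z \<in> carrier (deg1 C) \<and> snd f x = snd g z},
               mult = (\<lambda>_ _. (\<zero>\<^bsub>deg1 A\<^esub>, \<zero>\<^bsub>deg1 C\<^esub>)),
               one = (\<zero>\<^bsub>deg1 A\<^esub>, \<zero>\<^bsub>deg1 C\<^esub>),
               zero = (\<zero>\<^bsub>deg1 A\<^esub>, \<zero>\<^bsub>deg1 C\<^esub>),
               add = (\<lambda>(x, z) (x', z'). (x \<oplus>\<^bsub>deg1 A\<^esub> x', z \<oplus>\<^bsub>deg1 C\<^esub> z')),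
               smult = (\<lambda>(a, c) (x, z). (a \<odot>\<^bsub>deg1 A\<^esub> x, c \<odot>\<^bsub>deg1 C\<^esub> z)) \<rparr>,
      dif = (\<lambda>(x, z). (dif A x, dif C z)) \<rparr>"

text \<open>A correspondence R1 <-f- R12 -g-> R2 is represented by the triple (R12, f, g).\<close>
type_synonym ('a, 'b, 'c, 'd, 'e, 'f) corr =
  "('a, 'b) dgr \<times> ('a, 'b, 'c, 'd) dgmor \<times> ('a, 'b, 'e, 'f) dgmor"

definition is_corr :: "('c, 'd) dgr \<Rightarrow> ('e, 'f) dgr \<Rightarrow> ('a, 'b, 'c, 'd, 'e, 'f) corr \<Rightarrow> bool" where
  "is_corr R1 R2 c \<longleftrightarrow> (case c of (R12, f, g) \<Rightarrow>
     is_dgr R12 \<and> dg_hom R12 R1 f \<and> dg_hom R12 R2 g)"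

definition corr_comp ::
  "('a, 'b, 'c, 'd, 'e, 'f) corr \<Rightarrow> ('g, 'h, 'e, 'f, 'i, 'j) corr
     \<Rightarrow> ('a \<times> 'g, 'b \<times> 'h, 'c, 'd, 'i, 'j) corr" where
  "corr_comp c12 c23 = (case c12 of (R12, f, g) \<Rightarrow> case c23 of (R23, f', g') \<Rightarrow>
     (fib_prod R12 R23 g f',
      (fst f \<circ> fst, snd f \<circ> fst),
      (fst g' \<circ> snd, snd g' \<circ> snd)))"

definition weakly_admissible :: "('c, 'd) dgr \<Rightarrow> ('e, 'f) dgr \<Rightarrow> ('a, 'b, 'c, 'd, 'e, 'f) corr \<Rightarrow> bool" where
  "weakly_admissible R1 R2 c \<longleftrightarrow> is_corr R1 R2 c \<and> (case c of (R12, f, g) \<Rightarrow>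
     quasi_iso R12 R1 f \<and>
     (\<lambda>x. (snd f x, snd g x)) ` carrier (deg1 R12) = carrier (deg1 R1) \<times> carrier (deg1 R2))"

definition anamorphism :: "('c, 'd) dgr \<Rightarrow> ('e, 'f) dgr \<Rightarrow> ('a, 'b, 'c, 'd, 'e, 'f) corr \<Rightarrow> bool" where
  "anamorphism R1 R2 c \<longleftrightarrow> is_corr R1 R2 c \<and> (case c of (R12, f, g) \<Rightarrow>
     quasi_iso R12 R1 f \<and> dg_surj R12 R1 f)"

end

theory Submission
  imports Defs
begin

(* The left leg of the composite is the projection R12 x_R2 R23 -> R12 followed by f,
   and quasi-isomorphisms compose.  The projection is the base change of f' along g, and
   base change preserves quasi-isomorphisms that are onto in degree -1: cycles lift
   uniquely because f' is bijective on ker d, and a relation a = a' + d x lifts because the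
   defect of any lift of x through f' lies in the degree-0 kernel of f', which consists of
   boundaries of elements killed by f'.  Both for weakly admissible correspondences and for
   anamorphisms f' is onto in degree -1, and the remaining surjectivity conditions pass to
   the fibre product by lifting one factor at a time. *)

lemma abelian_group_hom_additiveI:
  assumes "abelian_group G" and "abelian_group H"
    and "h \<in> carrier G \<rightarrow> carrier H"
    and "\<And>x y. x \<in> carrier G \<Longrightarrow> y \<in> carrier G \<Longrightarrow> h (x \<oplus>\<^bsub>G\<^esub> y) = h x \<oplus>\<^bsub>H\<^esub> h y"
  shows "abelian_group_hom G H h"
  using assms
  by (intro abelian_group_homI group_hom.intro group_hom_axioms.intro)
    (auto simp: hom_def abelian_group.a_group)

locale dg_ring =
  fixes A :: "('a, 'b) dgr"
  assumes is_dgr: "is_dgr A"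
begin

sublocale module "deg0 A" "deg1 A"
  using is_dgr by (simp add: is_dgr_def)

sublocale dif: abelian_group_hom "deg1 A" "deg0 A" "dif A"
  using is_dgr
  by (intro abelian_group_hom_additiveI M.abelian_group_axioms R.abelian_group_axioms)
    (auto simp: is_dgr_def)

lemma dif_smult [simp]:
  "r \<in> carrier (deg0 A) \<Longrightarrow> x \<in> carrier (deg1 A) \<Longrightarrow>
     dif A (r \<odot>\<^bsub>deg1 A\<^esub> x) = r \<otimes>\<^bsub>deg0 A\<^esub> dif A x"
  using is_dgr by (simp add: is_dgr_def)

lemma dif_smult_comm:
  "x \<in> carrier (deg1 A) \<Longrightarrow> y \<in> carrier (deg1 A) \<Longrightarrow>
     dif A x \<odot>\<^bsub>deg1 A\<^esub> y = dif A y \<odot>\<^bsub>deg1 A\<^esub> x"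
  using is_dgr by (simp add: is_dgr_def)

lemma cong_im_refl: "a \<in> carrier (deg0 A) \<Longrightarrow> cong_im A a a"
  unfolding cong_im_def by (intro bexI[of _ "\<zero>\<^bsub>deg1 A\<^esub>"]) auto

lemma cong_im_trans:
  assumes "cong_im A a b" and "cong_im A b c" and "c \<in> carrier (deg0 A)"
  shows "cong_im A a c"
proof -
  obtain y where "y \<in> carrier (deg1 A)" "a = b \<oplus>\<^bsub>deg0 A\<^esub> dif A y"
    using assms(1) by (auto simp: cong_im_def)
  moreover obtain y' where "y' \<in> carrier (deg1 A)" "b = c \<oplus>\<^bsub>deg0 A\<^esub> dif A y'"
    using assms(2) by (auto simp: cong_im_def)
  ultimately show ?thesis
    unfolding cong_im_def using assms(3)
    by (intro bexI[of _ "y' \<oplus>\<^bsub>deg1 A\<^esub> y"]) (auto simp: R.a_assoc)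
qed

end

locale dg_morphism = A: dg_ring A + B: dg_ring B
  for A :: "('a, 'b) dgr" and B :: "('c, 'd) dgr" +
  fixes \<phi> :: "('a, 'b, 'c, 'd) dgmor"
  assumes dg_hom: "dg_hom A B \<phi>"
begin

sublocale ring_hom_cring "deg0 A" "deg0 B" "fst \<phi>"
  using dg_hom by unfold_locales (simp add: dg_hom_def)

sublocale snd: abelian_group_hom "deg1 A" "deg1 B" "snd \<phi>"
  using dg_hom
  by (intro abelian_group_hom_additiveI A.M.abelian_group_axioms B.M.abelian_group_axioms)
    (auto simp: dg_hom_def)

lemma snd_smult [simp]:
  "r \<in> carrier (deg0 A) \<Longrightarrow> x \<in> carrier (deg1 A) \<Longrightarrow>
     snd \<phi> (r \<odot>\<^bsub>deg1 A\<^esub> x) = fst \<phi> r \<odot>\<^bsub>deg1 B\<^esub> snd \<phi> x"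
  using dg_hom by (simp add: dg_hom_def)

lemma fst_dif [simp]: "x \<in> carrier (deg1 A) \<Longrightarrow> fst \<phi> (dif A x) = dif B (snd \<phi> x)"
  using dg_hom by (simp add: dg_hom_def)

lemma snd_dg_ker: "x \<in> dg_ker A \<Longrightarrow> snd \<phi> x \<in> dg_ker B"
  by (auto simp: dg_ker_def simp flip: fst_dif)

lemma cong_im_image:
  assumes "cong_im A a a'" and "a' \<in> carrier (deg0 A)"
  shows "cong_im B (fst \<phi> a) (fst \<phi> a')"
proof -
  obtain y where "y \<in> carrier (deg1 A)" "a = a' \<oplus>\<^bsub>deg0 A\<^esub> dif A y"
    using assms(1) by (auto simp: cong_im_def)
  then show ?thesis
    unfolding cong_im_def using assms(2) by (intro bexI[of _ "snd \<phi> y"]) auto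
qed

end

lemma dg_hom_comp:
  assumes "dg_hom A B \<phi>" and "dg_hom B C \<psi>"
  shows "dg_hom A C (fst \<psi> \<circ> fst \<phi>, snd \<psi> \<circ> snd \<phi>)"
  using assms unfolding dg_hom_def by (auto simp: Pi_iff ring_hom_closed intro: ring_hom_trans)

lemma quasi_iso_comp:
  assumes "is_dgr B" and "is_dgr C"
    and \<phi>: "quasi_iso A B \<phi>" and \<psi>: "quasi_iso B C \<psi>"
  shows "quasi_iso A C (fst \<psi> \<circ> fst \<phi>, snd \<psi> \<circ> snd \<phi>)"
proof -
  have "dg_hom A B \<phi>" and "dg_hom B C \<psi>"
    using \<phi> \<psi> by (auto simp: quasi_iso_def)
  then interpret \<psi>: dg_morphism B C \<psi>
    using assms(1,2) by unfold_locales
  have \<phi>_closed: "fst \<phi> a \<in> carrier (deg0 B)" if "a \<in> carrier (deg0 A)" for a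
    using \<open>dg_hom A B \<phi>\<close> that by (auto simp: dg_hom_def ring_hom_closed)
  have "\<exists>a\<in>carrier (deg0 A). cong_im C c (fst \<psi> (fst \<phi> a))" if "c \<in> carrier (deg0 C)" for c
  proof -
    obtain b where b: "b \<in> carrier (deg0 B)" "cong_im C c (fst \<psi> b)"
      using \<psi> \<open>c \<in> carrier (deg0 C)\<close> by (auto simp: quasi_iso_def)
    obtain a where a: "a \<in> carrier (deg0 A)" "cong_im B b (fst \<phi> a)"
      using \<phi> b(1) by (auto simp: quasi_iso_def)
    have "cong_im C c (fst \<psi> (fst \<phi> a))"
      using \<psi>.B.cong_im_trans[OF b(2) \<psi>.cong_im_image[OF a(2)]] a(1) \<phi>_closed by simp
    with a(1) show ?thesis by blast
  qed
  with assms \<phi>_closed dg_hom_comp[OF \<open>dg_hom A B \<phi>\<close> \<open>dg_hom B C \<psi>\<close>] show ?thesis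
    by (auto simp: quasi_iso_def intro: bij_betw_trans)
qed

lemma (in dg_morphism) quasi_iso_fst_kernel_boundary:
  assumes "quasi_iso A B \<phi>" and "e \<in> carrier (deg0 A)" and "fst \<phi> e = \<zero>\<^bsub>deg0 B\<^esub>"
  obtains w where "w \<in> carrier (deg1 A)" "dif A w = e" "snd \<phi> w = \<zero>\<^bsub>deg1 B\<^esub>"
proof -
  have "cong_im B (fst \<phi> e) (fst \<phi> \<zero>\<^bsub>deg0 A\<^esub>)"
    using assms(3) by (simp add: B.cong_im_refl)
  then have "cong_im A e \<zero>\<^bsub>deg0 A\<^esub>"
    using assms(1,2) by (simp add: quasi_iso_def)
  then obtain w1 where w1: "w1 \<in> carrier (deg1 A)" "dif A w1 = e"
    by (auto simp: cong_im_def)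
  have "snd \<phi> w1 \<in> dg_ker B"
    using w1 assms(3) by (auto simp: dg_ker_def simp flip: fst_dif)
  then obtain k where k: "k \<in> dg_ker A" "snd \<phi> k = snd \<phi> w1"
    using assms(1) unfolding quasi_iso_def bij_betw_def by (metis imageE)
  show thesis
  proof
    show "w1 \<ominus>\<^bsub>deg1 A\<^esub> k \<in> carrier (deg1 A)" "dif A (w1 \<ominus>\<^bsub>deg1 A\<^esub> k) = e"
      "snd \<phi> (w1 \<ominus>\<^bsub>deg1 A\<^esub> k) = \<zero>\<^bsub>deg1 B\<^esub>"
      using w1 k by (auto simp: dg_ker_def a_minus_def B.M.r_neg)
  qed
qed

lemma fib_prod_simps [simp]:
  "carrier (deg0 (fib_prod A C f g)) =
     {(a, c). a \<in> carrier (deg0 A) \<and> c \<in> carrier (deg0 C) \<and> fst f a = fst g c}"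
  "carrier (deg1 (fib_prod A C f g)) =
     {(x, z). x \<in> carrier (deg1 A) \<and> z \<in> carrier (deg1 C) \<and> snd f x = snd g z}"
  "(a, c) \<oplus>\<^bsub>deg0 (fib_prod A C f g)\<^esub> (a', c') = (a \<oplus>\<^bsub>deg0 A\<^esub> a', c \<oplus>\<^bsub>deg0 C\<^esub> c')"
  "(a, c) \<otimes>\<^bsub>deg0 (fib_prod A C f g)\<^esub> (a', c') = (a \<otimes>\<^bsub>deg0 A\<^esub> a', c \<otimes>\<^bsub>deg0 C\<^esub> c')"
  "\<zero>\<^bsub>deg0 (fib_prod A C f g)\<^esub> = (\<zero>\<^bsub>deg0 A\<^esub>, \<zero>\<^bsub>deg0 C\<^esub>)"
  "\<one>\<^bsub>deg0 (fib_prod A C f g)\<^esub> = (\<one>\<^bsub>deg0 A\<^esub>, \<one>\<^bsub>deg0 C\<^esub>)"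
  "(x, z) \<oplus>\<^bsub>deg1 (fib_prod A C f g)\<^esub> (x', z') = (x \<oplus>\<^bsub>deg1 A\<^esub> x', z \<oplus>\<^bsub>deg1 C\<^esub> z')"
  "\<zero>\<^bsub>deg1 (fib_prod A C f g)\<^esub> = (\<zero>\<^bsub>deg1 A\<^esub>, \<zero>\<^bsub>deg1 C\<^esub>)"
  "(a, c) \<odot>\<^bsub>deg1 (fib_prod A C f g)\<^esub> (x, z) = (a \<odot>\<^bsub>deg1 A\<^esub> x, c \<odot>\<^bsub>deg1 C\<^esub> z)"
  "dif (fib_prod A C f g) (x, z) = (dif A x, dif C z)"
  by (simp_all add: fib_prod_def)

lemma is_dgr_fib_prod:
  assumes "is_dgr A" and "is_dgr B" and "is_dgr C"
    and "dg_hom A B f" and "dg_hom C B g"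
  shows "is_dgr (fib_prod A C f g)"
proof -
  interpret f: dg_morphism A B f
    using assms(1,2,4) by unfold_locales
  interpret g: dg_morphism C B g
    using assms(3,2,5) by unfold_locales
  let ?P = "fib_prod A C f g"
  have "abelian_group (deg0 ?P)"
  proof (rule abelian_groupI)
    show "\<exists>q\<in>carrier (deg0 ?P). q \<oplus>\<^bsub>deg0 ?P\<^esub> p = \<zero>\<^bsub>deg0 ?P\<^esub>" if "p \<in> carrier (deg0 ?P)" for p
      using that by (intro bexI[of _ "(\<ominus>\<^bsub>deg0 A\<^esub> fst p, \<ominus>\<^bsub>deg0 C\<^esub> snd p)"])
        (auto simp: f.A.R.l_neg g.A.R.l_neg)
  qed (auto simp: f.A.R.a_ac g.A.R.a_ac)
  moreover have "comm_monoid (deg0 ?P)"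
    by (rule comm_monoidI) (auto simp: f.A.R.m_ac g.A.R.m_ac)
  ultimately have "cring (deg0 ?P)"
    by (rule cringI) (auto simp: f.A.R.l_distr g.A.R.l_distr)
  moreover have "abelian_group (deg1 ?P)"
  proof (rule abelian_groupI)
    show "\<exists>q\<in>carrier (deg1 ?P). q \<oplus>\<^bsub>deg1 ?P\<^esub> p = \<zero>\<^bsub>deg1 ?P\<^esub>" if "p \<in> carrier (deg1 ?P)" for p
      using that by (intro bexI[of _ "(\<ominus>\<^bsub>deg1 A\<^esub> fst p, \<ominus>\<^bsub>deg1 C\<^esub> snd p)"])
        (auto simp: f.A.M.l_neg g.A.M.l_neg)
  qed (auto simp: f.A.M.a_ac g.A.M.a_ac)
  ultimately have "module (deg0 ?P) (deg1 ?P)"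
    by (rule moduleI)
      (auto simp: f.A.smult_l_distr g.A.smult_l_distr f.A.smult_r_distr g.A.smult_r_distr
        f.A.smult_assoc1 g.A.smult_assoc1)
  with \<open>cring (deg0 ?P)\<close> show ?thesis
    unfolding is_dgr_def by (auto simp: f.A.dif_smult_comm g.A.dif_smult_comm)
qed

lemma dg_hom_fib_prod_fst: "dg_hom (fib_prod A C f g) A (fst, fst)"
  by (auto simp: dg_hom_def ring_hom_def)

lemma dg_hom_fib_prod_snd: "dg_hom (fib_prod A C f g) C (snd, snd)"
  by (auto simp: dg_hom_def ring_hom_def)

locale quasi_iso_base_change = g: dg_morphism A B g + f: dg_morphism C B f
  for A :: "('a, 'b) dgr" and B :: "('c, 'd) dgr" and C :: "('e, 'f) dgr" and g f +
  assumes quasi_iso: "quasi_iso C B f"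
    and snd_surj: "snd f ` carrier (deg1 C) = carrier (deg1 B)"
begin

abbreviation P where "P \<equiv> fib_prod A C g f"

lemma dg_ker_fst_bij: "bij_betw fst (dg_ker P) (dg_ker A)"
proof (rule bij_betw_imageI)
  have f_ker_inj: "inj_on (snd f) (dg_ker C)"
    using quasi_iso by (simp add: quasi_iso_def bij_betw_def)
  show "inj_on fst (dg_ker P)"
  proof (rule inj_onI)
    fix p q assume "p \<in> dg_ker P" "q \<in> dg_ker P" "fst p = fst q"
    then have "snd p \<in> dg_ker C" "snd q \<in> dg_ker C" "snd f (snd p) = snd f (snd q)"
      by (auto simp: dg_ker_def)
    with \<open>fst p = fst q\<close> show "p = q"
      by (simp add: prod_eq_iff inj_onD[OF f_ker_inj])
  qed
  show "fst ` dg_ker P = dg_ker A"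
  proof (intro equalityI subsetI)
    fix x assume x: "x \<in> dg_ker A"
    then obtain z where "z \<in> dg_ker C" "snd f z = snd g x"
      using g.snd_dg_ker quasi_iso unfolding quasi_iso_def bij_betw_def by (metis imageE)
    with x have "(x, z) \<in> dg_ker P"
      by (auto simp: dg_ker_def)
    then show "x \<in> fst ` dg_ker P" by force
  qed (auto simp: dg_ker_def)
qed

lemma cong_im_fst_reflect:
  assumes p: "(a, c) \<in> carrier (deg0 P)" and p': "(a', c') \<in> carrier (deg0 P)"
    and "cong_im A a a'"
  shows "cong_im P (a, c) (a', c')"
proof -
  obtain x where x: "x \<in> carrier (deg1 A)" "a = a' \<oplus>\<^bsub>deg0 A\<^esub> dif A x"
    using assms(3) by (auto simp: cong_im_def)
  obtain z0 where z0: "z0 \<in> carrier (deg1 C)" "snd f z0 = snd g x"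
    using snd_surj x(1) by (metis g.snd.hom_closed imageE)
  define e where "e = c \<ominus>\<^bsub>deg0 C\<^esub> (c' \<oplus>\<^bsub>deg0 C\<^esub> dif C z0)"
  have e: "e \<in> carrier (deg0 C)"
    using p p' z0 by (simp add: e_def)
  have fc: "fst f c = fst f c' \<oplus>\<^bsub>deg0 B\<^esub> dif B (snd g x)"
    using p p' x by simp
  have "fst f e = \<zero>\<^bsub>deg0 B\<^esub>"
    using p p' x(1) z0 unfolding e_def by (simp add: fc a_minus_def g.B.R.r_neg)
  then obtain w where w: "w \<in> carrier (deg1 C)" "dif C w = e" "snd f w = \<zero>\<^bsub>deg1 B\<^esub>"
    using f.quasi_iso_fst_kernel_boundary[OF quasi_iso e] by blast
  have "c' \<oplus>\<^bsub>deg0 C\<^esub> dif C (z0 \<oplus>\<^bsub>deg1 C\<^esub> w) = (c' \<oplus>\<^bsub>deg0 C\<^esub> dif C z0) \<oplus>\<^bsub>deg0 C\<^esub> e"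
    using p' z0 w e by (simp add: f.A.R.a_assoc)
  also have "\<dots> = c"
    using p p' z0 unfolding e_def a_minus_def by (simp add: f.A.R.a_lcomm f.A.R.r_neg)
  finally have "c = c' \<oplus>\<^bsub>deg0 C\<^esub> dif C (z0 \<oplus>\<^bsub>deg1 C\<^esub> w)" ..
  moreover have "(x, z0 \<oplus>\<^bsub>deg1 C\<^esub> w) \<in> carrier (deg1 P)"
    using x z0 w by simp
  ultimately show ?thesis
    using x unfolding cong_im_def by force
qed

lemma cong_im_fst_surj:
  assumes a: "a \<in> carrier (deg0 A)"
  shows "\<exists>p\<in>carrier (deg0 P). cong_im A a (fst p)"
proof -
  obtain c where c: "c \<in> carrier (deg0 C)" "cong_im B (fst g a) (fst f c)"
    using quasi_iso a unfolding quasi_iso_def by (meson g.hom_closed)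
  then obtain y where y: "y \<in> carrier (deg1 B)" "fst g a = fst f c \<oplus>\<^bsub>deg0 B\<^esub> dif B y"
    by (auto simp: cong_im_def)
  obtain z where z: "z \<in> carrier (deg1 C)" "snd f z = y"
    using y(1) unfolding snd_surj[symmetric] by blast
  have "(a, c \<oplus>\<^bsub>deg0 C\<^esub> dif C z) \<in> carrier (deg0 P)"
    using a c z y by simp
  with a show ?thesis
    by (force simp: g.A.cong_im_refl)
qed

lemma quasi_iso_fst: "quasi_iso P A (fst, fst)"
  unfolding quasi_iso_def
  using dg_hom_fib_prod_fst[of A C g f] dg_ker_fst_bij cong_im_fst_reflect cong_im_fst_surj
  by auto

end

lemma quasi_iso_fib_prod_fst:
  assumes "is_dgr A" and "is_dgr B" and "is_dgr C" and "dg_hom A B g"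
    and "quasi_iso C B f" and "snd f ` carrier (deg1 C) = carrier (deg1 B)"
  shows "quasi_iso (fib_prod A C g f) A (fst, fst)"
proof -
  have "dg_hom C B f"
    using assms(5) by (simp add: quasi_iso_def)
  with assms interpret quasi_iso_base_change A B C g f
    by unfold_locales
  show ?thesis
    by (rule quasi_iso_fst)
qed

lemma dg_surj_comp:
  "dg_surj A B \<phi> \<Longrightarrow> dg_surj B C \<psi> \<Longrightarrow> dg_surj A C (fst \<psi> \<circ> fst \<phi>, snd \<psi> \<circ> snd \<phi>)"
  by (simp add: dg_surj_def flip: image_image)

lemma dg_surj_fib_prod_fst:
  assumes g: "dg_hom A B g" and f: "dg_surj C B f"
  shows "dg_surj (fib_prod A C g f) A (fst, fst)"
proof -
  have "fst g a \<in> fst f ` carrier (deg0 C)" if "a \<in> carrier (deg0 A)" for a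
    using f g that ring_hom_closed by (fastforce simp: dg_surj_def dg_hom_def)
  moreover have "snd g x \<in> snd f ` carrier (deg1 C)" if "x \<in> carrier (deg1 A)" for x
    using f g that by (auto simp: dg_surj_def dg_hom_def)
  ultimately show ?thesis
    unfolding dg_surj_def by (force simp: image_iff)
qed

lemma fib_prod_deg1_jointly_surj:
  assumes "(\<lambda>x. (snd f x, snd g x)) ` carrier (deg1 R12) = carrier (deg1 R1) \<times> carrier (deg1 R2)"
    and "(\<lambda>z. (snd f' z, snd g' z)) ` carrier (deg1 R23) = carrier (deg1 R2) \<times> carrier (deg1 R3)"
    and "carrier (deg1 R2) \<noteq> {}"
  shows "(\<lambda>p. (snd f (fst p), snd g' (snd p))) ` carrier (deg1 (fib_prod R12 R23 g f'))
           = carrier (deg1 R1) \<times> carrier (deg1 R3)"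
proof (intro equalityI subsetI)
  fix q assume "q \<in> (\<lambda>p. (snd f (fst p), snd g' (snd p))) ` carrier (deg1 (fib_prod R12 R23 g f'))"
  then show "q \<in> carrier (deg1 R1) \<times> carrier (deg1 R3)"
    using assms(1,2) by fastforce
next
  fix q assume "q \<in> carrier (deg1 R1) \<times> carrier (deg1 R3)"
  then obtain u v where q: "q = (u, v)" "u \<in> carrier (deg1 R1)" "v \<in> carrier (deg1 R3)"
    by blast
  obtain y where "y \<in> carrier (deg1 R2)"
    using assms(3) by blast
  with q(2) have "(u, y) \<in> (\<lambda>x. (snd f x, snd g x)) ` carrier (deg1 R12)"
    using assms(1) by simp
  then obtain x where x: "x \<in> carrier (deg1 R12)" "snd f x = u" "snd g x \<in> carrier (deg1 R2)"
    using assms(1) by force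
  with q(3) have "(snd g x, v) \<in> (\<lambda>z. (snd f' z, snd g' z)) ` carrier (deg1 R23)"
    using assms(2) by simp
  then obtain z where z: "z \<in> carrier (deg1 R23)" "snd f' z = snd g x" "snd g' z = v"
    by force
  show "q \<in> (\<lambda>p. (snd f (fst p), snd g' (snd p))) ` carrier (deg1 (fib_prod R12 R23 g f'))"
    using q(1) x z by (intro image_eqI[of _ _ "(x, z)"]) auto
qed

lemma corr_comp_Pair [simp]:
  "corr_comp (R12, f, g) (R23, f', g') =
     (fib_prod R12 R23 g f', (fst f \<circ> fst, snd f \<circ> fst), (fst g' \<circ> snd, snd g' \<circ> snd))"
  by (simp add: corr_comp_def)

lemma is_corr_corr_comp:
  assumes "is_dgr R2" and "is_corr R1 R2 (R12, f, g)" and "is_corr R2 R3 (R23, f', g')"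
  shows "is_corr R1 R3 (corr_comp (R12, f, g) (R23, f', g'))"
proof -
  have R12: "is_dgr R12" "dg_hom R12 R1 f" "dg_hom R12 R2 g"
    and R23: "is_dgr R23" "dg_hom R23 R2 f'" "dg_hom R23 R3 g'"
    using assms(2,3) by (simp_all add: is_corr_def)
  show ?thesis
    using is_dgr_fib_prod[OF R12(1) assms(1) R23(1) R12(3) R23(2)]
      dg_hom_comp[OF dg_hom_fib_prod_fst R12(2), of R23 g f']
      dg_hom_comp[OF dg_hom_fib_prod_snd R23(3), of R12 g f']
    by (simp add: is_corr_def)
qed

lemma quasi_iso_corr_comp_left:
  assumes "is_dgr R1" and "is_dgr R2" and "is_corr R1 R2 (R12, f, g)" and "is_corr R2 R3 (R23, f', g')"
    and "quasi_iso R12 R1 f" and "quasi_iso R23 R2 f'"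
    and "snd f' ` carrier (deg1 R23) = carrier (deg1 R2)"
  shows "quasi_iso (fib_prod R12 R23 g f') R1 (fst f \<circ> fst, snd f \<circ> fst)"
proof -
  have "is_dgr R12" "dg_hom R12 R2 g" "is_dgr R23"
    using assms(3,4) by (simp_all add: is_corr_def)
  then have "quasi_iso (fib_prod R12 R23 g f') R12 (fst, fst)"
    using assms(2,6,7) by (intro quasi_iso_fib_prod_fst)
  then show ?thesis
    using quasi_iso_comp[OF \<open>is_dgr R12\<close> assms(1) _ assms(5)] by fastforce
qed

lemma weakly_admissible_corr_comp:
  assumes "is_dgr R1" and "is_dgr R2" and "is_dgr R3"
    and "weakly_admissible R1 R2 c12" and "weakly_admissible R2 R3 c23"
  shows "weakly_admissible R1 R3 (corr_comp c12 c23)"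
proof -
  obtain R12 f g where c12: "c12 = (R12, f, g)"
    by (cases c12) auto
  obtain R23 f' g' where c23: "c23 = (R23, f', g')"
    by (cases c23) auto
  have corr: "is_corr R1 R2 (R12, f, g)" "is_corr R2 R3 (R23, f', g')"
    and qiso: "quasi_iso R12 R1 f" "quasi_iso R23 R2 f'"
    and surj1: "(\<lambda>x. (snd f x, snd g x)) ` carrier (deg1 R12) = carrier (deg1 R1) \<times> carrier (deg1 R2)"
    and surj2: "(\<lambda>z. (snd f' z, snd g' z)) ` carrier (deg1 R23) = carrier (deg1 R2) \<times> carrier (deg1 R3)"
    using assms(4,5) by (simp_all add: weakly_admissible_def c12 c23)
  interpret R2: dg_ring R2 by unfold_locales fact
  interpret R3: dg_ring R3 by unfold_locales fact
  have "snd f' ` carrier (deg1 R23) = carrier (deg1 R2)"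
    using arg_cong[OF surj2, of "image fst"] R3.M.zero_closed by (auto simp: image_image)
  then show ?thesis
    using is_corr_corr_comp[OF assms(2) corr] quasi_iso_corr_comp_left[OF assms(1,2) corr qiso]
      fib_prod_deg1_jointly_surj[OF surj1 surj2] R2.M.zero_closed
    by (auto simp: weakly_admissible_def c12 c23)
qed

lemma anamorphism_corr_comp:
  assumes "is_dgr R1" and "is_dgr R2"
    and "anamorphism R1 R2 c12" and "anamorphism R2 R3 c23"
  shows "anamorphism R1 R3 (corr_comp c12 c23)"
proof -
  obtain R12 f g where c12: "c12 = (R12, f, g)"
    by (cases c12) auto
  obtain R23 f' g' where c23: "c23 = (R23, f', g')"
    by (cases c23) auto
  have corr: "is_corr R1 R2 (R12, f, g)" "is_corr R2 R3 (R23, f', g')"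
    and qiso: "quasi_iso R12 R1 f" "quasi_iso R23 R2 f'"
    and surj: "dg_surj R12 R1 f" "dg_surj R23 R2 f'"
    using assms(3,4) by (simp_all add: anamorphism_def c12 c23)
  have "dg_hom R12 R2 g"
    using corr(1) by (simp add: is_corr_def)
  then have "dg_surj (fib_prod R12 R23 g f') R1 (fst f \<circ> fst, snd f \<circ> fst)"
    using dg_surj_comp[OF dg_surj_fib_prod_fst surj(1)] surj(2) by simp
  moreover have "snd f' ` carrier (deg1 R23) = carrier (deg1 R2)"
    using surj(2) by (simp add: dg_surj_def)
  ultimately show ?thesis
    using is_corr_corr_comp[OF assms(2) corr] quasi_iso_corr_comp_left[OF assms(1,2) corr qiso]
    by (simp add: anamorphism_def c12 c23)
qed

theorem lemma4p2p5:
  fixes R1 :: "('a1, 'b1) dgr" and R2 :: "('a2, 'b2) dgr" and R3 :: "('a3, 'b3) dgr"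
    and c12 :: "('a12, 'b12, 'a1, 'b1, 'a2, 'b2) corr"
    and c23 :: "('a23, 'b23, 'a2, 'b2, 'a3, 'b3) corr"
  assumes "is_dgr R1" and "is_dgr R2" and "is_dgr R3"
  shows "(weakly_admissible R1 R2 c12 \<and> weakly_admissible R2 R3 c23
            \<longrightarrow> weakly_admissible R1 R3 (corr_comp c12 c23)) \<and>
         (anamorphism R1 R2 c12 \<and> anamorphism R2 R3 c23
            \<longrightarrow> anamorphism R1 R3 (corr_comp c12 c23))"
  using weakly_admissible_corr_comp[OF assms] anamorphism_corr_comp[OF assms(1,2)] by blast

end
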